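(* Let $m \in \mathbb{N}$ and $k \geq 4$ be integers. If $|q - q_k| < q_k^{-(m+1)k-3}$, then there is a sequence $(c_j)_{j\ge1} \in \{0,1\}^\mathbb{N}$ such that $\sum_{j\ge1} c_j q^{-j} = 1$ and $(c_j)_{j\ge1} = (1^{k-1}0)^m (c_j)_{j \ge mk+1}$, i.e. its first $mk$ digits are $m$ consecutive copies of the word $1^{k-1}0$.
   Context: $q_k$ is the unique root in $(1,2)$ of $x^k - x^{k-1} - \cdots - x - 1 = 0$. $1^{k-1}0$ denotes the word of $k-1$ ones followed by a zero, and $(w)^m$ denotes $m$ concatenated copies of $w$. *)

theory Defs
  imports Complex_Main
begin

definition qk :: "nat \<Rightarrow> real" where
  "qk k = (THE x. 1 < x \<and> x < 2 \<and> x ^ k = (\<Sum>i<k. x ^ i))"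

end

theory Submission
  imports Defs
begin

(* Fixing the first mk digits to (1^(k-1)0)^m, the remaining digits have to expand the tail
   value r = q^(mk) (1 - P), where P is the value of the prefix, and the greedy algorithm
   expands every r in [0, 1/(q-1)] as long as 1 < q <= 2. Summing the prefix block by block
   gives (r - 1)(q^k - 1) = (q^k - q^(k-1) - ... - 1)(q^(mk) - 1), and (q - 1) times the
   second factor is q^(k+1) - 2q^k + 1, which vanishes at q_k. By the mean value theorem the
   hypothesis on |q - q_k| makes this polynomial times q^(mk) at most 1/2, whereas
   (2 - q)(q^k - 1) stays at least 1/2; so |r - 1|(q - 1) <= 2 - q, which puts r in the
   greedy range. *)

definition qk_poly :: "nat \<Rightarrow> real \<Rightarrow> real" where
  "qk_poly k x = x ^ (k + 1) - 2 * x ^ k + 1"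

lemma qk_poly_factor: "qk_poly k x = (x - 1) * (x ^ k - (\<Sum>i<k. x ^ i))"
  using power_diff_1_eq[of x k] by (simp add: qk_poly_def algebra_simps)

lemma qk_poly_eq_zero_iff: "qk_poly k x = 0 \<longleftrightarrow> x ^ k * (2 - x) = 1"
  by (auto simp: qk_poly_def algebra_simps)

lemma sum_inverse_powers_strict_antimono:
  fixes a b :: real
  assumes "0 < a" "a < b" "0 < k"
  shows "(\<Sum>i<k. 1 / b ^ (k - i)) < (\<Sum>i<k. 1 / a ^ (k - i))"
proof (rule sum_strict_mono)
  fix i assume "i \<in> {..<k}"
  then show "1 / b ^ (k - i) < 1 / a ^ (k - i)"
    using assms by (intro divide_strict_left_mono power_strict_mono) auto
qed (use assms in auto)

lemma qk_root_unique:
  fixes x y :: real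
  assumes "0 < k" "1 < x" "x ^ k = (\<Sum>i<k. x ^ i)" "1 < y" "y ^ k = (\<Sum>i<k. y ^ i)"
  shows "x = y"
proof -
  \<comment> \<open>Dividing by z^k turns the root equation into a strictly decreasing function of z.\<close>
  have normalized: "(\<Sum>i<k. 1 / z ^ (k - i)) = 1" if "1 < z" "z ^ k = (\<Sum>i<k. z ^ i)" for z :: real
  proof -
    have "(\<Sum>i<k. 1 / z ^ (k - i)) = (\<Sum>i<k. z ^ i / z ^ k)"
    proof (rule sum.cong)
      fix i assume "i \<in> {..<k}"
      then have "z ^ k = z ^ i * z ^ (k - i)" by (simp flip: power_add)
      then show "1 / z ^ (k - i) = z ^ i / z ^ k" using that by (simp add: field_simps)
    qed simp
    also have "\<dots> = 1"
      using that by (simp only: sum_divide_distrib[symmetric] that(2)[symmetric]) simp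
    finally show ?thesis .
  qed
  show ?thesis
    using sum_inverse_powers_strict_antimono[of x y k] sum_inverse_powers_strict_antimono[of y x k]
      normalized[of x] normalized[of y] assms
    by (cases x y rule: linorder_cases) auto
qed

lemma qk_bounds:
  assumes "k \<ge> 4"
  shows "1.9 < qk k" "qk k < 2" "qk_poly k (qk k) = 0"
proof -
  have "(10::real) < 1.9 ^ 4" by (simp add: eval_nat_numeral)
  also have "(1.9::real) ^ 4 \<le> 1.9 ^ k" using assms by (intro power_increasing) auto
  finally have neg: "qk_poly k 1.9 < 0" by (simp add: qk_poly_def)
  have pos: "qk_poly k 2 = 1" by (simp add: qk_poly_def)
  have "continuous_on {1.9..2} (qk_poly k)" unfolding qk_poly_def by (intro continuous_intros)
  then obtain x where x: "1.9 \<le> x" "x \<le> 2" "qk_poly k x = 0"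
    using IVT'[of "qk_poly k" "1.9" 0 2] neg pos by auto
  moreover have "x \<noteq> 1.9" "x \<noteq> 2" using x(3) neg pos by (metis less_irrefl, metis zero_neq_one)
  ultimately have x_bounds: "1.9 < x" "x < 2" by auto
  then have root: "x ^ k = (\<Sum>i<k. x ^ i)" using x(3) by (simp add: qk_poly_factor)
  have "qk k = x" unfolding qk_def
  proof (rule the_equality)
    show "1 < x \<and> x < 2 \<and> x ^ k = (\<Sum>i<k. x ^ i)" using x_bounds root by simp
  qed (use qk_root_unique[of k _ x] x_bounds root assms in auto)
  then show "1.9 < qk k" "qk k < 2" "qk_poly k (qk k) = 0" using x x_bounds by auto
qed

primrec greedy_remainder :: "real \<Rightarrow> real \<Rightarrow> nat \<Rightarrow> real" where
  "greedy_remainder q x 0 = x"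
| "greedy_remainder q x (Suc n) =
     q * greedy_remainder q x n - (if 1 \<le> q * greedy_remainder q x n then 1 else 0)"

definition greedy_digit :: "real \<Rightarrow> real \<Rightarrow> nat \<Rightarrow> nat" where
  "greedy_digit q x n = (if 1 \<le> q * greedy_remainder q x n then 1 else 0)"

lemma greedy_remainder_bounds:
  assumes "1 < q" "q \<le> 2" "0 \<le> x" "x \<le> 1 / (q - 1)"
  shows "0 \<le> greedy_remainder q x n \<and> greedy_remainder q x n \<le> 1 / (q - 1)"
proof (induction n)
  case 0
  then show ?case using assms by simp
next
  case (Suc n)
  let ?y = "greedy_remainder q x n"
  show ?case
  proof (cases "1 \<le> q * ?y")
    case True
    have "q * ?y \<le> q * (1 / (q - 1))" using Suc assms by (intro mult_left_mono) auto
    also have "\<dots> = 1 + 1 / (q - 1)" using assms by (simp add: field_simps)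
    finally show ?thesis using True by simp
  next
    case False
    moreover have "1 \<le> 1 / (q - 1)" using assms by (simp add: field_simps)
    ultimately have "q * ?y \<le> 1 / (q - 1)" by linarith
    then show ?thesis using False Suc assms by auto
  qed
qed

lemma greedy_partial_sum:
  assumes "q \<noteq> 0"
  shows "(\<Sum>i<n. real (greedy_digit q x i) / q ^ (i + 1)) = x - greedy_remainder q x n / q ^ n"
proof (induction n)
  case (Suc n)
  have "greedy_remainder q x (Suc n) / q ^ Suc n
          = greedy_remainder q x n / q ^ n - real (greedy_digit q x n) / q ^ (n + 1)"
    using assms by (simp add: greedy_digit_def field_simps)
  then show ?case using Suc by simp
qed simp

lemma greedy_expansion_sums:
  assumes "1 < q" "q \<le> 2" "0 \<le> x" "x \<le> 1 / (q - 1)"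
  shows "(\<lambda>n. real (greedy_digit q x n) / q ^ (n + 1)) sums x"
proof -
  have "(\<lambda>n. greedy_remainder q x n / q ^ n) \<longlonglongrightarrow> 0"
  proof (rule tendsto_0_le)
    show "(\<lambda>n. (1 / q) ^ n) \<longlonglongrightarrow> 0" using assms by (intro LIMSEQ_power_zero) auto
    show "\<forall>\<^sub>F n in sequentially.
            norm (greedy_remainder q x n / q ^ n) \<le> norm ((1 / q) ^ n) * (1 / (q - 1))"
    proof (intro always_eventually allI)
      fix n
      have "norm (greedy_remainder q x n / q ^ n) = greedy_remainder q x n * (1 / q) ^ n"
        using greedy_remainder_bounds[OF assms, of n] assms by (simp add: power_one_over)
      also have "\<dots> \<le> (1 / (q - 1)) * (1 / q) ^ n"
        using greedy_remainder_bounds[OF assms, of n] assms by (intro mult_right_mono) auto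
      also have "\<dots> = norm ((1 / q) ^ n) * (1 / (q - 1))" using assms by simp
      finally show "norm (greedy_remainder q x n / q ^ n) \<le> norm ((1 / q) ^ n) * (1 / (q - 1))" .
    qed
  qed
  then have "(\<lambda>n. x - greedy_remainder q x n / q ^ n) \<longlonglongrightarrow> x - 0"
    by (intro tendsto_diff tendsto_const)
  then show ?thesis
    using assms unfolding sums_def by (subst greedy_partial_sum) auto
qed

lemma sums_prefix_tail:
  fixes a d :: "nat \<Rightarrow> real"
  assumes "q \<noteq> 0"
    and "(\<lambda>n. d n / q ^ (n + 1)) sums (q ^ N * (x - (\<Sum>i<N. a i / q ^ (i + 1))))"
  shows "(\<lambda>n. (if n < N then a n else d (n - N)) / q ^ (n + 1)) sums x"
proof -
  let ?f = "\<lambda>n. (if n < N then a n else d (n - N)) / q ^ (n + 1)"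
  let ?P = "\<Sum>i<N. a i / q ^ (i + 1)"
  have "(\<lambda>n. d n / q ^ (n + 1) / q ^ N) sums (q ^ N * (x - ?P) / q ^ N)"
    by (rule sums_divide[OF assms(2)])
  moreover have "(\<lambda>n. d n / q ^ (n + 1) / q ^ N) = (\<lambda>n. ?f (n + N))"
    by (simp add: power_add algebra_simps)
  ultimately have "(\<lambda>n. ?f (n + N)) sums (x - ?P)" using assms(1) by simp
  then have "?f sums (x - ?P + (\<Sum>i<N. ?f i))" by (rule sums_iff_shift[THEN iffD1])
  moreover have "(\<Sum>i<N. ?f i) = ?P" by simp
  ultimately show ?thesis by simp
qed

definition periodic_prefix :: "real \<Rightarrow> nat \<Rightarrow> nat \<Rightarrow> real" where
  "periodic_prefix q k N = (\<Sum>i<N. if k dvd (i + 1) then 0 else 1 / q ^ (i + 1))"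

lemma periodic_prefix_digits:
  "periodic_prefix q k N = (\<Sum>i<N. (if k dvd (i + 1) then 0 else 1) / q ^ (i + 1))"
  unfolding periodic_prefix_def by (intro sum.cong) auto

lemma periodic_block_value:
  fixes q :: real
  assumes "0 < k" "q \<noteq> 0"
  shows "q ^ ((j + 1) * k) * (\<Sum>i\<in>{j * k..<j * k + k}. if k dvd (i + 1) then 0 else 1 / q ^ (i + 1))
           = (\<Sum>i<k. q ^ i) - 1"
proof -
  obtain l where k: "k = Suc l" using assms(1) gr0_implies_Suc by blast
  have shift: "(\<Sum>i\<in>{j * k..<j * k + k}. g i) = (\<Sum>t<k. g (j * k + t))" for g :: "nat \<Rightarrow> real"
    using sum.shift_bounds_nat_ivl[of g 0 "j * k" k] by (simp add: atLeast0LessThan add.commute)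
  have "q ^ ((j + 1) * k) * (\<Sum>i\<in>{j * k..<j * k + k}. if k dvd (i + 1) then 0 else 1 / q ^ (i + 1))
          = (\<Sum>t<k. q ^ ((j + 1) * k) * (if k dvd (j * k + t + 1) then 0 else 1 / q ^ (j * k + t + 1)))"
    unfolding shift sum_distrib_left ..
  also have "\<dots> = (\<Sum>t<l. q ^ (l - t))"
  proof -
    have "j * k + l + 1 = (j + 1) * k" using k by simp
    then have "k dvd (j * k + l + 1)" by (metis dvd_triv_right)
    then have "(\<Sum>t<k. q ^ ((j + 1) * k) * (if k dvd (j * k + t + 1) then 0 else 1 / q ^ (j * k + t + 1)))
        = (\<Sum>t<l. q ^ ((j + 1) * k) * (if k dvd (j * k + t + 1) then 0 else 1 / q ^ (j * k + t + 1)))"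
      by (simp add: k)
    also have "\<dots> = (\<Sum>t<l. q ^ (l - t))"
    proof (rule sum.cong)
      fix t assume "t \<in> {..<l}"
      then have "t < l" by simp
      have "\<not> k dvd (t + 1)" using \<open>t < l\<close> k by (intro nat_dvd_not_less) auto
      then have "\<not> k dvd (j * k + t + 1)" by (metis add.assoc dvd_add_right_iff dvd_triv_right)
      moreover have "(j + 1) * k = (j * k + t + 1) + (l - t)" using \<open>t < l\<close> k by simp
      ultimately show "q ^ ((j + 1) * k) * (if k dvd (j * k + t + 1) then 0 else 1 / q ^ (j * k + t + 1))
          = q ^ (l - t)"
        using assms(2) by (simp add: power_add)
    qed simp
    finally show ?thesis .
  qed
  also have "\<dots> = (\<Sum>t<l. q ^ Suc t)"
    using sum.nat_diff_reindex[of "\<lambda>t. q ^ Suc t" l] by (simp add: Suc_diff_Suc)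
  also have "\<dots> = (\<Sum>i<k. q ^ i) - 1"
    by (simp only: k sum.lessThan_Suc_shift) simp
  finally show ?thesis .
qed

lemma geometric_block_remainder:
  fixes q S :: real and B :: "nat \<Rightarrow> real"
  assumes "\<And>j. q ^ ((j + 1) * k) * B j = S"
  shows "(q ^ (m * k) * (1 - (\<Sum>j<m. B j)) - 1) * (q ^ k - 1) = (q ^ k - 1 - S) * (q ^ (m * k) - 1)"
proof (induction m)
  case (Suc m)
  define X where "X = q ^ (m * k) * (1 - (\<Sum>j<m. B j))"
  have "q ^ (Suc m * k) * (1 - (\<Sum>j<Suc m. B j)) = q ^ k * X - q ^ ((m + 1) * k) * B m"
    by (simp add: X_def power_add algebra_simps)
  also have "\<dots> = q ^ k * X - S" by (simp only: assms)
  finally have step: "q ^ (Suc m * k) * (1 - (\<Sum>j<Suc m. B j)) = q ^ k * X - S" .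
  have "(q ^ (Suc m * k) * (1 - (\<Sum>j<Suc m. B j)) - 1) * (q ^ k - 1)
      = q ^ k * ((X - 1) * (q ^ k - 1)) + (q ^ k - 1 - S) * (q ^ k - 1)"
    unfolding step by (simp add: algebra_simps)
  also have "\<dots> = q ^ k * ((q ^ k - 1 - S) * (q ^ (m * k) - 1)) + (q ^ k - 1 - S) * (q ^ k - 1)"
    by (simp only: Suc.IH[folded X_def])
  also have "\<dots> = (q ^ k - 1 - S) * (q ^ (Suc m * k) - 1)"
    by (simp add: power_add algebra_simps)
  finally show ?case .
qed simp

lemma periodic_prefix_remainder:
  assumes "0 < k" "q \<noteq> 0"
  shows "(q ^ (m * k) * (1 - periodic_prefix q k (m * k)) - 1) * (q ^ k - 1)
           = (q ^ k - (\<Sum>i<k. q ^ i)) * (q ^ (m * k) - 1)"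
proof -
  have "periodic_prefix q k (m * k)
      = (\<Sum>j<m. \<Sum>i\<in>{j * k..<j * k + k}. if k dvd (i + 1) then 0 else 1 / q ^ (i + 1))"
    unfolding periodic_prefix_def by (rule sum.nat_group[symmetric])
  then show ?thesis
    using geometric_block_remainder[OF periodic_block_value[OF assms], of m] by simp
qed

lemma periodic_prefix_remainder_bound:
  assumes "1 < q" "0 < k" "\<bar>qk_poly k q\<bar> * q ^ (m * k) \<le> (2 - q) * (q ^ k - 1)"
  shows "\<bar>q ^ (m * k) * (1 - periodic_prefix q k (m * k)) - 1\<bar> * (q - 1) \<le> 2 - q"
proof -
  let ?r = "q ^ (m * k) * (1 - periodic_prefix q k (m * k))"
  have qk_gt: "1 < q ^ k" using assms by (intro one_less_power) auto
  have "\<bar>?r - 1\<bar> * (q - 1) * (q ^ k - 1) = \<bar>(q - 1) * (q ^ k - (\<Sum>i<k. q ^ i))\<bar> * (q ^ (m * k) - 1)"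
    using arg_cong[OF periodic_prefix_remainder[of k q m], of abs] assms qk_gt
    by (simp add: abs_mult one_le_power)
  also have "\<dots> \<le> \<bar>qk_poly k q\<bar> * q ^ (m * k)"
    by (simp add: qk_poly_factor mult_left_mono)
  also have "\<dots> \<le> (2 - q) * (q ^ k - 1)" by (fact assms(3))
  finally show ?thesis using qk_gt by simp
qed

lemma greedy_range_if_near_one:
  fixes q r :: real
  assumes "3 / 2 \<le> q" "\<bar>r - 1\<bar> * (q - 1) \<le> 2 - q"
  shows "0 \<le> r" "r \<le> 1 / (q - 1)"
proof -
  have "2 - q \<le> q - 1" using assms by simp
  with assms(2) have "\<bar>r - 1\<bar> * (q - 1) \<le> q - 1" by (rule order_trans)
  then have "\<bar>r - 1\<bar> \<le> 1" using assms by (simp add: mult_le_cancel_right1)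
  then show "0 \<le> r" by simp
  have "(r - 1) * (q - 1) \<le> \<bar>r - 1\<bar> * (q - 1)" using assms by (intro mult_right_mono) auto
  then have "(r - 1) * (q - 1) \<le> 2 - q" using assms(2) by (rule order_trans)
  then show "r \<le> 1 / (q - 1)" using assms by (simp add: field_simps)
qed

lemma qk_poly_deriv_abs_le:
  assumes "2 - 2 / (k + 1) \<le> z" "z \<le> 2"
  shows "\<bar>real (k + 1) * z ^ k - 2 * real k * z ^ (k - 1)\<bar> \<le> 2 * z ^ (k - 1)"
proof (cases k)
  case (Suc l)
  have "2 / (k + 1) \<le> (2::real)" by (simp add: field_simps)
  then have "0 \<le> z" using assms(1) by linarith
  have "2 * real (k + 1) - 2 \<le> real (k + 1) * z"
    using assms(1) by (simp add: field_simps)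
  moreover have "real (k + 1) * z \<le> real (k + 1) * 2" using assms(2) by (intro mult_left_mono) auto
  ultimately have "\<bar>real (k + 1) * z - 2 * real k\<bar> \<le> 2" by simp
  then have "z ^ l * \<bar>real (k + 1) * z - 2 * real k\<bar> \<le> z ^ l * 2"
    using \<open>0 \<le> z\<close> by (intro mult_left_mono) auto
  moreover have "real (k + 1) * z ^ k - 2 * real k * z ^ (k - 1) = z ^ l * (real (k + 1) * z - 2 * real k)"
    by (simp add: Suc algebra_simps)
  ultimately show ?thesis using \<open>0 \<le> z\<close> by (simp add: Suc abs_mult)
qed simp

lemma qk_poly_lipschitz:
  assumes "0 < k" "2 - 2 / (k + 1) \<le> a" "b \<le> 2" "x \<in> {a..b}" "y \<in> {a..b}"
  shows "\<bar>qk_poly k x - qk_poly k y\<bar> \<le> 2 * b ^ (k - 1) * \<bar>x - y\<bar>"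
proof -
  have "2 / (k + 1) \<le> (2::real)" by (simp add: field_simps)
  then have "0 \<le> a" using assms(2) by linarith
  have deriv: "DERIV (qk_poly k) z :> real (k + 1) * z ^ k - 2 * real k * z ^ (k - 1)" for z
  proof -
    have "z * z ^ (k - 1) = z ^ k" using \<open>0 < k\<close> by (cases k) auto
    then show ?thesis
      unfolding qk_poly_def by (auto intro!: derivative_eq_intros simp: algebra_simps)
  qed
  have ordered: "\<bar>qk_poly k v - qk_poly k u\<bar> \<le> 2 * b ^ (k - 1) * (v - u)"
    if "a \<le> u" "u < v" "v \<le> b" for u v
  proof -
    obtain z where z: "u < z" "z < v"
      and mvt: "qk_poly k v - qk_poly k u = (v - u) * (real (k + 1) * z ^ k - 2 * real k * z ^ (k - 1))"
      using MVT2[OF \<open>u < v\<close> deriv] by blast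
    have "\<bar>real (k + 1) * z ^ k - 2 * real k * z ^ (k - 1)\<bar> \<le> 2 * z ^ (k - 1)"
      using z that assms by (intro qk_poly_deriv_abs_le) auto
    also have "\<dots> \<le> 2 * b ^ (k - 1)"
      using z that \<open>0 \<le> a\<close> by (intro mult_left_mono power_mono) auto
    finally show ?thesis
      using that by (simp add: mvt abs_mult mult.commute mult_left_mono)
  qed
  show ?thesis
    using ordered[of x y] ordered[of y x] assms(4,5)
    by (cases x y rule: linorder_cases) (auto simp: abs_minus_commute)
qed

lemma one_plus_power_le_exp:
  fixes x :: real
  assumes "0 \<le> x"
  shows "(1 + x) ^ n \<le> exp (real n * x)"
  using assms by (simp add: exp_of_nat_mult power_mono)

locale near_qk =
  fixes k m :: nat and Q q :: real
  assumes k_ge_4: "4 \<le> k"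
    and Q_gt: "1.9 < Q" and Q_lt: "Q < 2" and Q_root: "qk_poly k Q = 0"
    and q_near: "\<bar>q - Q\<bar> < 1 / Q ^ ((m + 1) * k + 3)"
begin

abbreviation eps :: real where
  "eps \<equiv> 1 / Q ^ ((m + 1) * k + 3)"

lemma two_minus_Q: "2 - Q = 1 / Q ^ k"
  using Q_root Q_gt by (simp add: qk_poly_eq_zero_iff field_simps)

lemma Q_power_ge: "1 + 9 / 10 * real j \<le> Q ^ j"
proof -
  have "1 + real j * (Q - 1) \<le> (1 + (Q - 1)) ^ j" using Q_gt by (intro Bernoulli_inequality) auto
  moreover have "real j * (9 / 10) \<le> real j * (Q - 1)" using Q_gt by (intro mult_left_mono) auto
  ultimately show ?thesis by simp
qed

lemma nat_le_Q_power: "real j \<le> 2 * Q ^ j"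
  using Q_power_ge[of j] by simp

lemma Q_cube_ge: "6 \<le> Q ^ 3"
proof -
  have "(1.9::real) ^ 3 \<le> Q ^ 3" using Q_gt by (intro power_mono) auto
  then show ?thesis by (simp add: eval_nat_numeral)
qed

lemma Q_power_4_ge: "12 \<le> Q ^ 4"
proof -
  have "(1.9::real) ^ 4 \<le> Q ^ 4" using Q_gt by (intro power_mono) auto
  then show ?thesis by (simp add: eval_nat_numeral)
qed

lemma Q_power_k_ge: "12 \<le> Q ^ k"
proof -
  have "Q ^ 4 \<le> Q ^ k" using Q_gt k_ge_4 by (intro power_increasing) auto
  then show ?thesis using Q_power_4_ge by simp
qed

lemma eps_le: "eps \<le> (2 - Q) / Q ^ 3"
proof -
  have "Q ^ (k + 3) \<le> Q ^ ((m + 1) * k + 3)" using Q_gt by (intro power_increasing) auto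
  then have "eps \<le> 1 / Q ^ (k + 3)" using Q_gt by (intro divide_left_mono) auto
  then show ?thesis by (simp add: two_minus_Q power_add)
qed

lemma eps_le_sixth: "eps \<le> (2 - Q) / 6"
proof -
  have "(2 - Q) / Q ^ 3 \<le> (2 - Q) / 6" using Q_cube_ge Q_lt Q_gt by (intro divide_left_mono) auto
  then show ?thesis using eps_le by linarith
qed

lemma q_between: "Q - eps < q" "q < Q + eps"
  using q_near by linarith+

lemma neighbourhood_in_deriv_region: "2 - 2 / (k + 1) \<le> Q - eps" "Q + eps \<le> 2"
proof -
  have "7 / 6 * (real k + 1) \<le> 2 * Q ^ k" using Q_power_ge[of k] by simp
  then have "7 / 6 * (2 - Q) \<le> 2 / (k + 1)" by (simp add: two_minus_Q field_simps)
  then show "2 - 2 / (k + 1) \<le> Q - eps" using eps_le_sixth by simp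
  show "Q + eps \<le> 2" using eps_le_sixth Q_lt by simp
qed

lemma q_bounds: "7 / 4 < q" "q < 2"
  using q_between neighbourhood_in_deriv_region(2) eps_le_sixth Q_gt by simp_all

lemma qk_poly_q_le: "\<bar>qk_poly k q\<bar> * q ^ (m * k) \<le> 2 / Q ^ 4 * (1 + eps / Q) ^ ((m + 1) * k - 1)"
proof -
  define n where "n = (m + 1) * k - 1"
  define M where "M = Q + eps"
  have n: "(m + 1) * k + 3 = n + 4" "k - 1 + m * k = n" using k_ge_4 by (auto simp: n_def)
  have pos: "0 < Q" "0 < eps" using Q_gt by auto
  have "\<bar>qk_poly k q\<bar> = \<bar>qk_poly k q - qk_poly k Q\<bar>" by (simp add: Q_root)
  also have "\<dots> \<le> 2 * M ^ (k - 1) * \<bar>q - Q\<bar>"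
    unfolding M_def using neighbourhood_in_deriv_region q_between pos k_ge_4
    by (intro qk_poly_lipschitz) auto
  also have "\<dots> \<le> 2 * M ^ (k - 1) * eps"
    using q_near pos by (intro mult_left_mono) (auto simp: M_def)
  finally have "\<bar>qk_poly k q\<bar> * q ^ (m * k) \<le> 2 * M ^ (k - 1) * eps * M ^ (m * k)"
    using q_between q_bounds by (intro mult_mono power_mono) (auto simp: M_def)
  \<comment> \<open>eps = 1 / Q^(n + 4) cancels the bulk Q^n of M^n.\<close>
  also have "\<dots> = 2 * (eps * Q ^ n) * (1 + eps / Q) ^ n"
  proof -
    have M_eq: "M = Q * (1 + eps / Q)" using pos by (simp add: M_def field_simps)
    have "M ^ (k - 1) * M ^ (m * k) = M ^ n" by (simp only: power_add[symmetric] n(2))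
    also have "\<dots> = Q ^ n * (1 + eps / Q) ^ n" by (simp only: M_eq power_mult_distrib)
    finally have "M ^ (k - 1) * M ^ (m * k) = Q ^ n * (1 + eps / Q) ^ n" .
    then show ?thesis by (simp add: algebra_simps)
  qed
  also have "eps * Q ^ n = 1 / Q ^ 4"
    unfolding n(1) using pos by (simp add: power_add)
  finally show ?thesis by (simp add: n_def)
qed

lemma one_plus_eps_power_le: "(1 + eps / Q) ^ ((m + 1) * k - 1) \<le> 3"
proof -
  define n where "n = (m + 1) * k - 1"
  have n: "(m + 1) * k + 3 = n + 4" using k_ge_4 by (auto simp: n_def)
  have pos: "0 < Q" "0 < eps" using Q_gt by auto
  have "real n * (eps / Q) = real n / Q ^ n / Q ^ 5"
    unfolding n using pos by (simp add: power_add field_simps eval_nat_numeral)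
  also have "\<dots> \<le> 2 / Q ^ 5"
    using nat_le_Q_power[of n] pos by (intro divide_right_mono) (auto simp: field_simps)
  also have "\<dots> \<le> 1"
  proof -
    have "Q ^ 4 \<le> Q ^ 5" using Q_gt by (intro power_increasing) auto
    then have "2 \<le> Q ^ 5" using Q_power_4_ge by linarith
    then show ?thesis using Q_gt by (simp add: divide_le_eq_1)
  qed
  finally have small: "real n * (eps / Q) \<le> 1" .
  have "(1 + eps / Q) ^ n \<le> exp (real n * (eps / Q))"
    using pos by (intro one_plus_power_le_exp) auto
  also have "\<dots> \<le> exp 1" using small by simp
  also have "\<dots> \<le> 3" by (rule exp_le)
  finally show ?thesis by (simp add: n_def)
qed

lemma qk_poly_q_small: "\<bar>qk_poly k q\<bar> * q ^ (m * k) \<le> 1 / 2"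
proof -
  have "2 / Q ^ 4 * (1 + eps / Q) ^ ((m + 1) * k - 1) \<le> 2 / Q ^ 4 * 3"
    using one_plus_eps_power_le Q_gt by (intro mult_left_mono) auto
  also have "\<dots> \<le> 1 / 2" using Q_power_4_ge Q_gt by (simp add: divide_le_eq_1)
  finally show ?thesis using qk_poly_q_le by linarith
qed

lemma k_eps_over_Q_le: "real k * (eps / Q) \<le> 1 / 6"
proof -
  have pos: "0 < Q" using Q_gt by simp
  have "Q ^ (k + 4) \<le> Q ^ ((m + 1) * k + 3 + 1)" using Q_gt by (intro power_increasing) auto
  then have "1 / Q ^ ((m + 1) * k + 3 + 1) \<le> 1 / Q ^ (k + 4)"
    using pos by (intro divide_left_mono) auto
  moreover have "eps / Q = 1 / Q ^ ((m + 1) * k + 3 + 1)"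
    by (simp add: power_add eval_nat_numeral)
  ultimately have "real k * (eps / Q) \<le> real k * (1 / Q ^ (k + 4))"
    by (intro mult_left_mono) auto
  also have "\<dots> = real k / Q ^ k / Q ^ 4" by (simp add: power_add)
  also have "\<dots> \<le> 2 / Q ^ 4"
    using nat_le_Q_power[of k] pos by (intro divide_right_mono) (auto simp: field_simps)
  also have "\<dots> \<le> 1 / 6" using Q_power_4_ge pos by (simp add: field_simps)
  finally show ?thesis .
qed

lemma q_power_ge: "5 / 6 * Q ^ k \<le> q ^ k"
proof -
  define eta where "eta = eps / Q"
  have pos: "0 < Q" "0 < eta" using Q_gt by (auto simp: eta_def)
  have small: "real k * eta \<le> 1 / 6" unfolding eta_def by (rule k_eps_over_Q_le)
  have "1 * eta \<le> real k * eta" using k_ge_4 pos by (intro mult_right_mono) auto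
  then have "1 + real k * - eta \<le> (1 + - eta) ^ k"
    using small by (intro Bernoulli_inequality) linarith
  then have "Q ^ k * (1 - real k * eta) \<le> Q ^ k * (1 + - eta) ^ k"
    using pos by (intro mult_left_mono) auto
  also have "\<dots> = (Q - eps) ^ k"
    using pos by (simp add: eta_def field_simps flip: power_mult_distrib)
  also have "\<dots> \<le> q ^ k"
    using q_between eps_le_sixth Q_lt Q_gt by (intro power_mono) auto
  finally have "Q ^ k * (1 - real k * eta) \<le> q ^ k" .
  moreover have "Q ^ k * (5 / 6) \<le> Q ^ k * (1 - real k * eta)"
    using small pos by (intro mult_left_mono) auto
  ultimately show ?thesis by simp
qed

lemma remainder_factor_large: "1 / 2 \<le> (2 - q) * (q ^ k - 1)"
proof -
  have "5 / 6 * (2 - Q) \<le> 2 - q" using q_between eps_le_sixth by simp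
  moreover have "3 / 4 * Q ^ k \<le> q ^ k - 1" using q_power_ge Q_power_k_ge by linarith
  ultimately have "5 / 6 * (2 - Q) * (3 / 4 * Q ^ k) \<le> (2 - q) * (q ^ k - 1)"
    using Q_lt Q_gt by (intro mult_mono) auto
  then show ?thesis using Q_gt by (simp add: two_minus_Q)
qed

lemma qk_poly_q_dominated: "\<bar>qk_poly k q\<bar> * q ^ (m * k) \<le> (2 - q) * (q ^ k - 1)"
  using qk_poly_q_small remainder_factor_large by linarith

lemma tail_greedy_expansion:
  defines "r \<equiv> q ^ (m * k) * (1 - periodic_prefix q k (m * k))"
  shows "(\<lambda>n. real (greedy_digit q r n) / q ^ (n + 1)) sums r"
proof -
  have "\<bar>r - 1\<bar> * (q - 1) \<le> 2 - q"
    unfolding r_def using q_bounds k_ge_4 qk_poly_q_dominated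
    by (intro periodic_prefix_remainder_bound) auto
  moreover have "3 / 2 \<le> q" using q_bounds by simp
  ultimately have "0 \<le> r" "r \<le> 1 / (q - 1)" using greedy_range_if_near_one by blast+
  then show ?thesis using q_bounds by (intro greedy_expansion_sums) auto
qed

end

theorem lemma3p4:
  fixes m k :: nat and q :: real
  assumes "k \<ge> 4"
    and "\<bar>q - qk k\<bar> < 1 / qk k ^ ((m + 1) * k + 3)"
  shows "\<exists>c :: nat \<Rightarrow> nat.
           (\<forall>j\<ge>1. c j \<in> {0, 1}) \<and>
           (\<lambda>j. real (c (j + 1)) / q ^ (j + 1)) sums 1 \<and>
           (\<forall>j. 1 \<le> j \<and> j \<le> m * k \<longrightarrow> c j = (if k dvd j then 0 else 1))"
proof -
  interpret near_qk k m "qk k" q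
    using assms qk_bounds[OF assms(1)] by unfold_locales auto
  let ?d = "greedy_digit q (q ^ (m * k) * (1 - periodic_prefix q k (m * k)))"
  define c where "c j = (if j \<le> m * k then (if k dvd j then 0 else 1) else ?d (j - m * k - 1))" for j
  have "(\<lambda>j. real (c (j + 1)) / q ^ (j + 1))
      = (\<lambda>n. (if n < m * k then (if k dvd (n + 1) then 0 else 1) else real (?d (n - m * k))) / q ^ (n + 1))"
    by (rule ext) (auto simp: c_def)
  moreover have "\<dots> sums 1"
    using tail_greedy_expansion q_bounds
    by (intro sums_prefix_tail[where d = "\<lambda>n. real (?d n)"]) (auto simp: periodic_prefix_digits)
  moreover have "\<forall>j\<ge>1. c j \<in> {0, 1}" by (simp add: c_def greedy_digit_def)
  ultimately show ?thesis by (intro exI[of _ c]) (simp add: c_def)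
qed

end
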